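(* Let $n\ge 2$, let $T=\{1,\dots,n\}$ and let $\mathcal T$ be a topology on $T$. Fix an integer $k\ge 1$. Let $A,R\subseteq T\setminus\{n\}$ be disjoint sets such that every point of $A$ is old (at stage $k$), every point of $R$ is new (at stage $k$), and $A\cup R\cup\{n\}$ is a new lower $k$-system of $\mathcal T$. Then at least one of the two sets $A$ or $A\cup\{n\}$ is open in $\mathcal T$.
   Context: For $\alpha\in T$, $\alpha^{*}$ (the covering set of $\alpha$) denotes the smallest open set of $\mathcal T$ containing $\alpha$. For an integer $m\ge 0$, an $m$-system is an open set $P$ of $\mathcal T$ such that $P\setminus\{n\}$ has exactly $m$ points; it is upper if $n\notin P$ and lower if $n\in P$. For fixed $k$, a point $\alpha\neq n$ is called old if $\alpha^{*}$ is an $m$-system for some $m<k$, and new if $\alpha^{*}$ is a $k$-system. A $k$-system is called new if it contains at least one point $p\neq n$ that is not contained in any $m$-system with $m\le k-1$. *)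

theory Defs
  imports "HOL-Analysis.Analysis"
begin

text \<open>A topology on T = {1..n} is an \<open>X :: nat topology\<close> with \<open>topspace X = {1..n}\<close>.
  The distinguished point is n.\<close>

definition covering_set :: "nat topology \<Rightarrow> nat \<Rightarrow> nat set" where
  "covering_set X a = \<Inter> {U. openin X U \<and> a \<in> U}"

definition m_system :: "nat topology \<Rightarrow> nat \<Rightarrow> nat \<Rightarrow> nat set \<Rightarrow> bool" where
  "m_system X n m P \<longleftrightarrow> openin X P \<and> card (P - {n}) = m"

definition upper_m_system :: "nat topology \<Rightarrow> nat \<Rightarrow> nat \<Rightarrow> nat set \<Rightarrow> bool" where
  "upper_m_system X n m P \<longleftrightarrow> m_system X n m P \<and> n \<notin> P"

definition lower_m_system :: "nat topology \<Rightarrow> nat \<Rightarrow> nat \<Rightarrow> nat set \<Rightarrow> bool" where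
  "lower_m_system X n m P \<longleftrightarrow> m_system X n m P \<and> n \<in> P"

definition old_point :: "nat topology \<Rightarrow> nat \<Rightarrow> nat \<Rightarrow> nat \<Rightarrow> bool" where
  "old_point X n k a \<longleftrightarrow> a \<noteq> n \<and> (\<exists>m<k. m_system X n m (covering_set X a))"

definition new_point :: "nat topology \<Rightarrow> nat \<Rightarrow> nat \<Rightarrow> nat \<Rightarrow> bool" where
  "new_point X n k a \<longleftrightarrow> a \<noteq> n \<and> m_system X n k (covering_set X a)"

definition new_k_system :: "nat topology \<Rightarrow> nat \<Rightarrow> nat \<Rightarrow> nat set \<Rightarrow> bool" where
  "new_k_system X n k P \<longleftrightarrow> m_system X n k P \<and>
     (\<exists>p\<in>P. p \<noteq> n \<and> \<not> (\<exists>m Q. m \<le> k - 1 \<and> m_system X n m Q \<and> p \<in> Q))"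

end

theory Submission
  imports Defs
begin

text \<open>The union \<open>U\<close> of the covering sets of the points of \<open>A\<close> is open and contains \<open>A\<close>;
  it lies inside the open set \<open>A \<union> R \<union> {n}\<close>. It misses \<open>R\<close>: a new point \<open>r\<close> in the covering
  set \<open>\<alpha>\<^sup>*\<close> of an old point \<open>\<alpha>\<close> would give \<open>r\<^sup>* \<subseteq> \<alpha>\<^sup>*\<close>, hence
  \<open>k = |r\<^sup>* - {n}| \<le> |\<alpha>\<^sup>* - {n}| < k\<close>. So \<open>U\<close> is \<open>A\<close> or \<open>A \<union> {n}\<close>.\<close>

lemma covering_set_mem: "a \<in> covering_set X a"
  unfolding covering_set_def by blast

lemma covering_set_minimal: "openin X U \<Longrightarrow> a \<in> U \<Longrightarrow> covering_set X a \<subseteq> U"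
  unfolding covering_set_def by blast

lemma openin_covering_set:
  assumes "finite (topspace X)" and "a \<in> topspace X"
  shows "openin X (covering_set X a)"
proof -
  let ?\<U> = "{U. openin X U \<and> a \<in> U}"
  have "?\<U> \<subseteq> Pow (topspace X)"
    using openin_subset by blast
  then have "finite ?\<U>"
    using assms(1) finite_subset by blast
  moreover have "topspace X \<in> ?\<U>"
    using assms(2) by auto
  ultimately show ?thesis
    unfolding covering_set_def by (intro openin_Inter) auto
qed

lemma openin_UN_covering_set:
  assumes "finite (topspace X)" and "A \<subseteq> topspace X"
  shows "openin X (\<Union>a\<in>A. covering_set X a)"
  using assms openin_covering_set by (intro openin_Union) auto

lemma new_point_notin_covering_set_old_point:
  assumes "finite (topspace X)" and "old_point X n k a" and "new_point X n k r"
  shows "r \<notin> covering_set X a"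
proof
  assume r_in: "r \<in> covering_set X a"
  obtain m where "m < k" and sys_a: "m_system X n m (covering_set X a)"
    using assms(2) unfolding old_point_def by blast
  then have open_a: "openin X (covering_set X a)"
    unfolding m_system_def by simp
  then have "finite (covering_set X a - {n})"
    using assms(1) by (meson finite_Diff openin_subset rev_finite_subset)
  moreover have "covering_set X r \<subseteq> covering_set X a"
    using covering_set_minimal[OF open_a r_in] .
  ultimately have "card (covering_set X r - {n}) \<le> card (covering_set X a - {n})"
    by (intro card_mono) auto
  moreover have "card (covering_set X r - {n}) = k"
    using assms(3) unfolding new_point_def m_system_def by simp
  moreover have "card (covering_set X a - {n}) = m"
    using sys_a unfolding m_system_def by simp
  ultimately show False
    using \<open>m < k\<close> by simp
qed

theorem lemma3:
  fixes X :: "nat topology" and n k :: nat and A R :: "nat set"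
  assumes "n \<ge> 2"
    and "topspace X = {1..n}"
    and "k \<ge> 1"
    and "A \<subseteq> {1..n} - {n}" and "R \<subseteq> {1..n} - {n}"
    and "A \<inter> R = {}"
    and "\<forall>a\<in>A. old_point X n k a"
    and "\<forall>r\<in>R. new_point X n k r"
    and "new_k_system X n k (A \<union> R \<union> {n})"
    and "lower_m_system X n k (A \<union> R \<union> {n})"
  shows "openin X A \<or> openin X (A \<union> {n})"
proof -
  define U where "U = (\<Union>a\<in>A. covering_set X a)"
  have fin: "finite (topspace X)"
    using assms(2) by simp
  have "openin X U"
    unfolding U_def using openin_UN_covering_set[OF fin] assms(2,4) by auto
  have "A \<subseteq> U"
    unfolding U_def using covering_set_mem by blast
  moreover have "U \<subseteq> A \<union> R \<union> {n}"
  proof -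
    have "openin X (A \<union> R \<union> {n})"
      using assms(10) unfolding lower_m_system_def m_system_def by simp
    then show ?thesis
      unfolding U_def using covering_set_minimal by (intro UN_least) auto
  qed
  moreover have "U \<inter> R = {}"
    unfolding U_def using new_point_notin_covering_set_old_point[OF fin] assms(7,8) by blast
  ultimately have "U = A \<or> U = A \<union> {n}"
    by blast
  with \<open>openin X U\<close> show ?thesis
    by auto
qed

end
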